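(* Assume Condition C1. Then $$\lim_{k\to\infty}k\cdot\mathbb E\Big[\prod_{i=0}^{k-1}\frac{S_i(W_0')}{S_i(W_0')+\lambda^*}\Big]=0,$$ where $W_0'\sim\mu$ is independent of $W_1',W_2',\dots$ used in the companion process.
   Context: Let $w^*>0$, $\mu$ a Borel probability measure on $[0,w^*]$, $h:[0,w^*]\to[0,\infty)$ and $g:[0,w^*]^2\to[0,\infty)$ bounded measurable. Companion process: for $w\in[0,w^*]$ and i.i.d. $\mu$-distributed $W_1',W_2',\dots$, $S_0(w)=h(w)$, $S_{i+1}(w)=S_i(w)+g(w,W'_{i+1})$. With $W\sim\mu$: $\tilde g(x)=\mathbb E[g(x,W)]$ and $\tilde g^*=\mathbb E[\sup_x g(x,W)]$. Condition C1: there is $\lambda^*>\tilde g^*$ with $\mathbb E\big[\frac{h(W)}{\lambda^*-\tilde g(W)}\big]=1$. *)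

theory Defs
  imports "HOL-Probability.Probability"
begin

text \<open>Companion process: S_i(w) = h(w) + sum_{j=1..i} g(w, W'_j), where the
  sequence W' is given as a function nat => real (W' 0 is unused here).\<close>
definition companion :: "(real \<Rightarrow> real) \<Rightarrow> (real \<Rightarrow> real \<Rightarrow> real) \<Rightarrow> real \<Rightarrow> (nat \<Rightarrow> real) \<Rightarrow> nat \<Rightarrow> real"
  where "companion h g w W' i = h w + (\<Sum>j\<in>{1..i}. g w (W' j))"

definition gtilde :: "real measure \<Rightarrow> (real \<Rightarrow> real \<Rightarrow> real) \<Rightarrow> real \<Rightarrow> real"
  where "gtilde \<mu> g x = (\<integral>w. g x w \<partial>\<mu>)"

definition gtilde_star :: "real measure \<Rightarrow> (real \<Rightarrow> real \<Rightarrow> real) \<Rightarrow> real \<Rightarrow> real"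
  where "gtilde_star \<mu> g wstar = (\<integral>w. (SUP x\<in>{0..wstar}. g x w) \<partial>\<mu>)"

end

theory Submission imports Defs "HOL-Real_Asymp.Real_Asymp" begin

(* Write f s = s / (s + lam) and psi v = v * ln v. Put delta = (lam - gtilde_star) / 2 and take a
   large constant c. Then
     Y_n = f (S_0) * ... * f (S_(n-1)) * psi (S_n + c + delta n)
   is a supermartingale: the next increment g (W_0', W_(n+1)') + delta has conditional mean at most
   lam - delta, and for large arguments the factor f (S_n) absorbs the resulting expected growth of psi.
   Hence psi (c + delta n) * E [f (S_0) * ... * f (S_n)] <= E [Y_n] <= E [Y_0] <= psi (B + c), and as
   psi (c + delta n) grows like n ln n, k times the expected product tends to 0. *)

lemma mult_ln_mono: "1 \<le> (a::real) \<Longrightarrow> a \<le> b \<Longrightarrow> a * ln a \<le> b * ln b"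
  by (intro mult_mono) auto

lemma mult_ln_add_le:
  fixes t X B :: real
  assumes "1 \<le> t" "0 \<le> X" "X \<le> B"
  shows "(t + X) * ln (t + X) \<le> t * ln t + X * (ln t + 1) + B\<^sup>2"
proof -
  have "t + X = t * (1 + X / t)"
    using assms by (simp add: distrib_left)
  moreover have "0 < 1 + X / t"
    using assms by (simp add: add_pos_nonneg)
  ultimately have "ln (t + X) = ln t + ln (1 + X / t)"
    using assms by (simp add: ln_mult)
  also have "ln (1 + X / t) \<le> X / t"
    using assms by (intro ln_add_one_self_le_self) auto
  finally have "(t + X) * ln (t + X) \<le> (t + X) * (ln t + X / t)"
    using assms by (intro mult_left_mono) auto
  also have "\<dots> = t * ln t + X * (ln t + 1) + X\<^sup>2 / t"
    using assms by (simp add: field_simps power2_eq_square)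
  also have "X\<^sup>2 / t \<le> X\<^sup>2"
    using assms by (simp add: divide_le_eq mult_le_cancel_left1)
  also have "X\<^sup>2 \<le> B\<^sup>2"
    using assms by (intro power_mono) auto
  finally show ?thesis by simp
qed

lemma ratio_mult_ln_drift_le:
  fixes t s lam X \<delta> B :: real
  assumes "0 < \<delta>" "0 < lam" "0 \<le> X" "X \<le> lam - \<delta>"
    and "exp ((lam + B\<^sup>2) / \<delta>) \<le> t" "0 \<le> s" "s \<le> t"
  shows "s / (s + lam) * (t * ln t + X * (ln t + 1) + B\<^sup>2) \<le> t * ln t"
proof -
  have "1 \<le> exp ((lam + B\<^sup>2) / \<delta>)"
    using assms by (simp add: add_pos_nonneg)
  then have t1: "1 \<le> t" using assms by linarith
  have "(lam + B\<^sup>2) / \<delta> \<le> ln t"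
    using assms t1 by (subst ln_ge_iff) auto
  then have "lam + B\<^sup>2 \<le> \<delta> * ln t"
    using assms by (simp add: divide_le_eq mult.commute)
  also have "\<delta> * ln t \<le> (lam - X) * ln t"
    using assms t1 by (intro mult_right_mono) auto
  finally have key: "X * (ln t + 1) + B\<^sup>2 \<le> lam * ln t"
    using assms by (simp add: algebra_simps)
  have "s / (s + lam) \<le> t / (t + lam)"
    using assms by (simp add: divide_simps) (simp add: algebra_simps mult_left_mono)
  then have "s / (s + lam) * (t * ln t + X * (ln t + 1) + B\<^sup>2)
      \<le> t / (t + lam) * (t * ln t + X * (ln t + 1) + B\<^sup>2)"
    using t1 assms by (intro mult_right_mono) auto
  also have "\<dots> \<le> t / (t + lam) * ((t + lam) * ln t)"
    using key t1 assms by (intro mult_left_mono) (auto simp: algebra_simps)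
  also have "\<dots> = t * ln t"
    using t1 assms by simp
  finally show ?thesis .
qed

lemma tendsto_linear_over_mult_ln:
  fixes c d K :: real
  assumes "0 < d" "1 < c"
  shows "(\<lambda>n. real (Suc n) * K / ((c + d * real n) * ln (c + d * real n))) \<longlonglongrightarrow> 0"
  using assms by real_asymp

lemma (in prob_space) nn_integral_ratio_mult_ln_le:
  fixes X :: "'a \<Rightarrow> real"
  assumes X_measurable: "X \<in> borel_measurable M"
    and X_bounds: "\<And>y. y \<in> space M \<Longrightarrow> 0 \<le> X y \<and> X y \<le> B"
    and "expectation X \<le> lam - \<delta>"
    and "0 < \<delta>" "0 < lam" "exp ((lam + B\<^sup>2) / \<delta>) \<le> t" "0 \<le> s" "s \<le> t"
  shows "(\<integral>\<^sup>+y. ennreal (s / (s + lam) * ((t + X y) * ln (t + X y))) \<partial>M) \<le> ennreal (t * ln t)"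
proof -
  have "1 \<le> exp ((lam + B\<^sup>2) / \<delta>)"
    using assms by (simp add: add_pos_nonneg)
  then have t1: "1 \<le> t"
    using assms by linarith
  have X_integrable: "integrable M X"
    using X_bounds X_measurable by (intro integrable_const_bound[where B=B]) (auto intro!: AE_I2)
  have "0 \<le> expectation X"
    using X_bounds by (intro integral_nonneg_AE) (auto intro!: AE_I2)
  have ratio_nonneg: "0 \<le> s / (s + lam)"
    using assms by simp
  have "(\<integral>\<^sup>+y. ennreal (s / (s + lam) * ((t + X y) * ln (t + X y))) \<partial>M)
      \<le> (\<integral>\<^sup>+y. ennreal (s / (s + lam) * (t * ln t + X y * (ln t + 1) + B\<^sup>2)) \<partial>M)"
    using mult_ln_add_le[OF t1, of "X _" B] X_bounds ratio_nonneg
    by (intro nn_integral_mono ennreal_leI mult_left_mono) auto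
  also have "\<dots> = ennreal (\<integral>y. s / (s + lam) * (t * ln t + X y * (ln t + 1) + B\<^sup>2) \<partial>M)"
    using X_integrable X_bounds ratio_nonneg t1
    by (intro nn_integral_eq_integral AE_I2 mult_nonneg_nonneg) (auto intro!: add_nonneg_nonneg)
  also have "\<dots> = ennreal (s / (s + lam) * (t * ln t + expectation X * (ln t + 1) + B\<^sup>2))"
    using X_integrable by (intro arg_cong[where f=ennreal]) (simp add: prob_space)
  also have "\<dots> \<le> ennreal (t * ln t)"
    using \<open>0 \<le> expectation X\<close> assms by (intro ennreal_leI ratio_mult_ln_drift_le) auto
  finally show ?thesis .
qed

lemma companion_fun_upd_le:
  "j \<le> n \<Longrightarrow> companion h g w (x(Suc n := y)) j = companion h g w x j"
  unfolding companion_def by (intro arg_cong2[where f="(+)"] sum.cong) auto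

lemma companion_fun_upd_Suc:
  "companion h g w (x(Suc n := y)) (Suc n) = companion h g w x n + g w y"
  using companion_fun_upd_le[of n n h g w x y]
  by (simp add: companion_def sum.cl_ivl_Suc)

lemma measurable_pair_section:
  assumes "(\<lambda>(x, y). f x y) \<in> measurable (M \<Otimes>\<^sub>M N) L" "x \<in> space M"
  shows "f x \<in> measurable N L"
  using measurable_comp[OF measurable_Pair1'[OF assms(2)] assms(1)] by (simp add: comp_def)

lemma borel_measurable_pair_measure_restrict_space:
  fixes M :: "'a::second_countable_topology measure"
  assumes sets_M: "sets M = sets (restrict_space borel S)"
    and f: "f \<in> borel_measurable (restrict_space borel (S \<times> S))"
  shows "f \<in> borel_measurable (M \<Otimes>\<^sub>M M)"
proof -
  have space_M: "space M = S"
    using sets_eq_imp_space_eq[OF sets_M] by (simp add: space_restrict_space)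
  have "(\<lambda>x. x) \<in> measurable M borel"
    using measurable_restrict_space1[OF measurable_ident_sets[OF refl]]
    by (simp only: measurable_cong_sets[OF sets_M refl])
  then have "(\<lambda>z. (fst z, snd z)) \<in> measurable (M \<Otimes>\<^sub>M M) (borel \<Otimes>\<^sub>M borel)"
    by (intro measurable_Pair measurable_compose[OF measurable_fst] measurable_compose[OF measurable_snd])
  then have "(\<lambda>z. z) \<in> measurable (M \<Otimes>\<^sub>M M) (restrict_space borel (S \<times> S))"
    by (intro measurable_restrict_space2) (auto simp: space_pair_measure space_M borel_prod)
  from measurable_comp[OF this f] show ?thesis
    by (simp add: comp_def)
qed

lemma gtilde_le_gtilde_star:
  fixes \<mu> :: "real measure"
  assumes "finite_measure \<mu>" "x \<in> {0..wstar}"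
    and g_section: "g x \<in> borel_measurable \<mu>"
    and g_sup: "(\<lambda>w. SUP x\<in>{0..wstar}. g x w) \<in> borel_measurable \<mu>"
    and g_bounds: "\<And>x y. x \<in> {0..wstar} \<Longrightarrow> y \<in> space \<mu> \<Longrightarrow> 0 \<le> g x y \<and> g x y \<le> B"
  shows "gtilde \<mu> g x \<le> gtilde_star \<mu> g wstar"
proof -
  interpret finite_measure \<mu> by fact
  have bdd: "bdd_above ((\<lambda>x. g x y) ` {0..wstar})" if "y \<in> space \<mu>" for y
    using g_bounds that by (intro bdd_aboveI[where M=B]) auto
  have le_sup: "g x y \<le> (SUP x\<in>{0..wstar}. g x y)" if "y \<in> space \<mu>" for y
    using bdd[OF that] assms(2) by (intro cSUP_upper)
  have "(SUP x\<in>{0..wstar}. g x y) \<le> B" if "y \<in> space \<mu>" for y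
    using g_bounds that assms(2) by (intro cSUP_least) auto
  moreover have "0 \<le> (SUP x\<in>{0..wstar}. g x y)" if "y \<in> space \<mu>" for y
    using le_sup[OF that] g_bounds[OF assms(2) that] by linarith
  ultimately have "integrable \<mu> (\<lambda>w. SUP x\<in>{0..wstar}. g x w)"
    using g_sup by (intro integrable_const_bound[where B=B]) (auto intro!: AE_I2)
  moreover have "integrable \<mu> (g x)"
    using g_section g_bounds[OF assms(2)] by (intro integrable_const_bound[where B=B]) (auto intro!: AE_I2)
  ultimately show ?thesis
    unfolding gtilde_def gtilde_star_def using le_sup by (intro integral_mono) auto
qed

locale companion_setting =
  fixes \<mu> :: "real measure" and h :: "real \<Rightarrow> real" and g :: "real \<Rightarrow> real \<Rightarrow> real"
    and B m lam :: real
  assumes prob_space_\<mu>: "prob_space \<mu>"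
    and h_measurable: "h \<in> borel_measurable \<mu>"
    and g_measurable: "(\<lambda>(x, y). g x y) \<in> borel_measurable (\<mu> \<Otimes>\<^sub>M \<mu>)"
    and h_bounds: "\<And>x. x \<in> space \<mu> \<Longrightarrow> 0 \<le> h x \<and> h x \<le> B"
    and g_bounds: "\<And>x y. x \<in> space \<mu> \<Longrightarrow> y \<in> space \<mu> \<Longrightarrow> 0 \<le> g x y \<and> g x y \<le> B"
    and gtilde_le: "\<And>x. x \<in> space \<mu> \<Longrightarrow> gtilde \<mu> g x \<le> m"
    and m_less: "m < lam"
begin

sublocale prob_space \<mu>
  by (rule prob_space_\<mu>)

sublocale product_sigma_finite "\<lambda>_::nat. \<mu>"
  by unfold_locales

abbreviation S :: "(nat \<Rightarrow> real) \<Rightarrow> nat \<Rightarrow> real"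
  where "S x \<equiv> companion h g (x 0) x"

lemma PiM_component_in_space: "x \<in> space (PiM K (\<lambda>_. \<mu>)) \<Longrightarrow> j \<in> K \<Longrightarrow> x j \<in> space \<mu>"
  by (auto simp: space_PiM PiE_iff)

lemma companion_measurable:
  assumes "0 \<in> K" "{1..i} \<subseteq> K"
  shows "(\<lambda>x. S x i) \<in> borel_measurable (PiM K (\<lambda>_. \<mu>))"
proof -
  have "(\<lambda>x. g (x 0) (x j)) \<in> borel_measurable (PiM K (\<lambda>_. \<mu>))" if "j \<in> K" for j
    using measurable_comp[OF measurable_Pair[OF measurable_component_singleton[OF \<open>0 \<in> K\<close>]
        measurable_component_singleton[OF that]] g_measurable]
    by (simp add: comp_def)
  moreover have "(\<lambda>x. h (x 0)) \<in> borel_measurable (PiM K (\<lambda>_. \<mu>))"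
    using measurable_comp[OF measurable_component_singleton[OF \<open>0 \<in> K\<close>] h_measurable]
    by (simp add: comp_def)
  ultimately show ?thesis
    using assms unfolding companion_def by (intro borel_measurable_add borel_measurable_sum) auto
qed

lemma companion_nonneg:
  assumes "x \<in> space (PiM K (\<lambda>_. \<mu>))" "0 \<in> K" "{1..i} \<subseteq> K"
  shows "0 \<le> S x i"
  using assms h_bounds g_bounds PiM_component_in_space[OF assms(1)]
  unfolding companion_def by (intro add_nonneg_nonneg sum_nonneg) auto

lemma g_section_measurable: "w \<in> space \<mu> \<Longrightarrow> g w \<in> borel_measurable \<mu>"
  using g_measurable by (rule measurable_pair_section)

lemma gtilde_nonneg: "w \<in> space \<mu> \<Longrightarrow> 0 \<le> gtilde \<mu> g w"
  unfolding gtilde_def using g_bounds by (intro integral_nonneg_AE) (auto intro!: AE_I2)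

lemma bound_nonneg: "0 \<le> B"
  using h_bounds not_empty by fastforce

lemma lam_pos: "0 < lam"
  using gtilde_nonneg gtilde_le m_less not_empty by fastforce

lemma companion_ratio_bounds:
  assumes "x \<in> space (PiM {0..<k} (\<lambda>_. \<mu>))" "i < k"
  shows "0 \<le> S x i / (S x i + lam) \<and> S x i / (S x i + lam) \<le> 1"
proof -
  have "0 \<le> S x i"
    using assms by (intro companion_nonneg[OF assms(1)]) auto
  then show ?thesis
    using lam_pos by simp
qed

definition drift :: real
  where "drift = (lam - m) / 2"

definition offset :: real
  where "offset = exp ((lam + (B + drift)\<^sup>2) / drift)"

lemma drift_pos: "0 < drift"
  using m_less by (simp add: drift_def)

lemma offset_gt_1: "1 < offset"
  using drift_pos lam_pos by (simp add: offset_def add_pos_nonneg)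

lemma offset_drift_gt_1: "1 < offset + drift * real n"
proof -
  have "0 \<le> drift * real n"
    using drift_pos by simp
  then show ?thesis
    using offset_gt_1 by linarith
qed

lemma mult_ln_offset_pos: "0 < (offset + drift * real n) * ln (offset + drift * real n)"
  using offset_drift_gt_1[of n] by simp

definition potential :: "nat \<Rightarrow> (nat \<Rightarrow> real) \<Rightarrow> real"
  where "potential n x = (\<Prod>j<n. S x j / (S x j + lam))
      * ((S x n + offset + drift * n) * ln (S x n + offset + drift * n))"

lemma potential_measurable: "potential n \<in> borel_measurable (PiM {0..<Suc n} (\<lambda>_. \<mu>))"
proof -
  have "\<And>j. j \<le> n \<Longrightarrow> (\<lambda>x. S x j) \<in> borel_measurable (PiM {0..<Suc n} (\<lambda>_. \<mu>))"
    by (intro companion_measurable) auto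
  then show ?thesis
    unfolding potential_def[abs_def]
    by (intro borel_measurable_times borel_measurable_prod borel_measurable_divide
        borel_measurable_add borel_measurable_ln borel_measurable_const) auto
qed

lemma nn_integral_potential_Suc_le:
  assumes x: "x \<in> space (PiM {0..<Suc n} (\<lambda>_. \<mu>))"
  shows "(\<integral>\<^sup>+y. ennreal (potential (Suc n) (x(Suc n := y))) \<partial>\<mu>) \<le> ennreal (potential n x)"
proof -
  define P where "P = (\<Prod>j<n. S x j / (S x j + lam))"
  define t where "t = S x n + offset + drift * n"
  have x0: "x 0 \<in> space \<mu>"
    using PiM_component_in_space[OF x] by simp
  have S_nonneg: "0 \<le> S x j" if "j \<le> n" for j
    using that by (intro companion_nonneg[OF x]) auto
  have "0 \<le> P"
    unfolding P_def using S_nonneg lam_pos by (intro prod_nonneg) auto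
  have potential_upd: "potential (Suc n) (x(Suc n := y))
      = P * (S x n / (S x n + lam) * ((t + (g (x 0) y + drift)) * ln (t + (g (x 0) y + drift))))"
    for y
    unfolding potential_def P_def t_def
    by (simp add: companion_fun_upd_le companion_fun_upd_Suc algebra_simps)
  then have "(\<integral>\<^sup>+y. ennreal (potential (Suc n) (x(Suc n := y))) \<partial>\<mu>)
      = (\<integral>\<^sup>+y. ennreal P * ennreal (S x n / (S x n + lam)
          * ((t + (g (x 0) y + drift)) * ln (t + (g (x 0) y + drift)))) \<partial>\<mu>)"
    by (intro nn_integral_cong) (simp only: potential_upd ennreal_mult'[OF \<open>0 \<le> P\<close>])
  also have "\<dots> = ennreal P * (\<integral>\<^sup>+y. ennreal (S x n / (S x n + lam)
          * ((t + (g (x 0) y + drift)) * ln (t + (g (x 0) y + drift)))) \<partial>\<mu>)"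
    by (intro nn_integral_cmult measurable_compose[OF _ measurable_ennreal] borel_measurable_times
        borel_measurable_add borel_measurable_ln borel_measurable_const g_section_measurable[OF x0])
  also have "\<dots> \<le> ennreal P * ennreal (t * ln t)"
  proof (intro mult_left_mono nn_integral_ratio_mult_ln_le[where B="B + drift"])
    show "(\<lambda>y. g (x 0) y + drift) \<in> borel_measurable \<mu>"
      using g_section_measurable[OF x0] by simp
    show "\<And>y. y \<in> space \<mu> \<Longrightarrow> 0 \<le> g (x 0) y + drift \<and> g (x 0) y + drift \<le> B + drift"
      using g_bounds[OF x0] drift_pos by fastforce
    have "integrable \<mu> (g (x 0))"
      using g_section_measurable[OF x0] g_bounds[OF x0]
      by (intro integrable_const_bound[where B=B]) (auto intro!: AE_I2)
    then show "expectation (\<lambda>y. g (x 0) y + drift) \<le> lam - drift"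
      using gtilde_le[OF x0] by (simp add: gtilde_def prob_space drift_def field_simps)
    show "exp ((lam + (B + drift)\<^sup>2) / drift) \<le> t" "0 \<le> S x n" "S x n \<le> t"
      using S_nonneg[of n] offset_gt_1 drift_pos unfolding t_def offset_def[symmetric] by auto
    show "0 < drift" "0 < lam"
      by (rule drift_pos, rule lam_pos)
  qed simp
  also have "\<dots> = ennreal (potential n x)"
    using ennreal_mult'[OF \<open>0 \<le> P\<close>, of "t * ln t"] by (simp only: potential_def P_def t_def)
  finally show ?thesis .
qed

lemma nn_integral_potential_le:
  "(\<integral>\<^sup>+x. ennreal (potential n x) \<partial>PiM {0..<Suc n} (\<lambda>_. \<mu>))
    \<le> ennreal ((B + offset) * ln (B + offset))"
proof (induction n)
  case 0
  have "(\<integral>\<^sup>+x. ennreal (potential 0 x) \<partial>PiM {0..<Suc 0} (\<lambda>_. \<mu>))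
      \<le> (\<integral>\<^sup>+x. ennreal ((B + offset) * ln (B + offset)) \<partial>PiM {0..<Suc 0} (\<lambda>_. \<mu>))"
  proof (intro nn_integral_mono ennreal_leI)
    fix x assume "x \<in> space (PiM {0..<Suc 0} (\<lambda>_. \<mu>))"
    then have "0 \<le> h (x 0)" "h (x 0) \<le> B"
      using h_bounds PiM_component_in_space[of x "{0..<Suc 0}" 0] by auto
    then show "potential 0 x \<le> (B + offset) * ln (B + offset)"
      unfolding potential_def companion_def using offset_gt_1 by (simp add: mult_ln_mono)
  qed
  also have "\<dots> = ennreal ((B + offset) * ln (B + offset))"
    by (simp add: prob_space.emeasure_space_1 prob_space_PiM prob_space_\<mu>)
  finally show ?case .
next
  case (Suc n)
  have insert_Suc: "{0..<Suc (Suc n)} = insert (Suc n) {0..<Suc n}"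
    by auto
  have "(\<integral>\<^sup>+x. ennreal (potential (Suc n) x) \<partial>PiM {0..<Suc (Suc n)} (\<lambda>_. \<mu>))
      = (\<integral>\<^sup>+x. (\<integral>\<^sup>+y. ennreal (potential (Suc n) (x(Suc n := y))) \<partial>\<mu>) \<partial>PiM {0..<Suc n} (\<lambda>_. \<mu>))"
    using potential_measurable[of "Suc n"] unfolding insert_Suc
    by (intro product_nn_integral_insert) auto
  also have "\<dots> \<le> (\<integral>\<^sup>+x. ennreal (potential n x) \<partial>PiM {0..<Suc n} (\<lambda>_. \<mu>))"
    by (intro nn_integral_mono nn_integral_potential_Suc_le)
  also note Suc.IH
  finally show ?case .
qed

lemma product_le_potential:
  assumes x: "x \<in> space (PiM {0..<Suc n} (\<lambda>_. \<mu>))"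
  shows "(offset + drift * n) * ln (offset + drift * n) * (\<Prod>i<Suc n. S x i / (S x i + lam))
    \<le> potential n x"
proof -
  let ?c = "(offset + drift * n) * ln (offset + drift * n)"
  have factor_bounds: "0 \<le> S x j / (S x j + lam) \<and> S x j / (S x j + lam) \<le> 1" if "j \<le> n" for j
    using that by (intro companion_ratio_bounds[OF x]) auto
  have prod_nonneg: "0 \<le> (\<Prod>i<j. S x i / (S x i + lam))" if "j \<le> Suc n" for j
    using factor_bounds that by (intro prod_nonneg) auto
  have prod_le: "(\<Prod>i<Suc n. S x i / (S x i + lam)) \<le> (\<Prod>i<n. S x i / (S x i + lam))"
    unfolding prod.lessThan_Suc using factor_bounds[of n] prod_nonneg[of n] by (intro mult_left_le) auto
  have "0 \<le> S x n"
    by (intro companion_nonneg[OF x]) auto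
  then have c_le: "?c \<le> (S x n + offset + drift * n) * ln (S x n + offset + drift * n)"
    using offset_drift_gt_1[of n] by (intro mult_ln_mono) auto
  have "?c * (\<Prod>i<Suc n. S x i / (S x i + lam)) \<le> (S x n + offset + drift * n) * ln (S x n + offset + drift * n)
      * (\<Prod>i<n. S x i / (S x i + lam))"
    by (rule mult_mono[OF c_le prod_le]) (use mult_ln_offset_pos[of n] c_le prod_nonneg[of "Suc n"] in auto)
  also have "\<dots> = potential n x"
    unfolding potential_def by (rule mult.commute)
  finally show ?thesis .
qed

lemma integral_companion_product_le:
  "(offset + drift * n) * ln (offset + drift * n)
      * (\<integral>x. (\<Prod>i<Suc n. S x i / (S x i + lam)) \<partial>PiM {0..<Suc n} (\<lambda>_. \<mu>))
    \<le> (B + offset) * ln (B + offset)"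
proof -
  let ?P = "PiM {0..<Suc n} (\<lambda>_. \<mu>)"
  let ?c = "(offset + drift * n) * ln (offset + drift * n)"
  let ?F = "\<lambda>x. ?c * (\<Prod>i<Suc n. S x i / (S x i + lam))"
  have F_bounds: "0 \<le> ?F x \<and> ?F x \<le> potential n x" if x: "x \<in> space ?P" for x
  proof
    show "0 \<le> ?F x"
      by (rule mult_nonneg_nonneg[OF less_imp_le[OF mult_ln_offset_pos] prod_nonneg])
        (use companion_ratio_bounds[OF x] in auto)
    show "?F x \<le> potential n x"
      by (rule product_le_potential[OF x])
  qed
  have "(\<lambda>j x. S x j) j \<in> borel_measurable ?P" if "j \<le> n" for j
    using that by (intro companion_measurable) auto
  then have F_measurable: "?F \<in> borel_measurable ?P"
    by (intro borel_measurable_times borel_measurable_prod borel_measurable_divide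
        borel_measurable_add borel_measurable_const) auto
  have "?c * (\<integral>x. (\<Prod>i<Suc n. S x i / (S x i + lam)) \<partial>?P) = (\<integral>x. ?F x \<partial>?P)"
    by (rule integral_mult_right_zero[symmetric])
  also have "\<dots> = enn2real (\<integral>\<^sup>+x. ennreal (?F x) \<partial>?P)"
    using F_measurable F_bounds by (intro integral_eq_nn_integral AE_I2) auto
  also have "\<dots> \<le> enn2real (ennreal ((B + offset) * ln (B + offset)))"
  proof (rule enn2real_mono)
    have "(\<integral>\<^sup>+x. ennreal (?F x) \<partial>?P) \<le> (\<integral>\<^sup>+x. ennreal (potential n x) \<partial>?P)"
      using F_bounds by (intro nn_integral_mono ennreal_leI) auto
    also note nn_integral_potential_le
    finally show "(\<integral>\<^sup>+x. ennreal (?F x) \<partial>?P) \<le> ennreal ((B + offset) * ln (B + offset))" .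
  qed simp
  also have "\<dots> = (B + offset) * ln (B + offset)"
    using bound_nonneg offset_gt_1 by simp
  finally show ?thesis .
qed

theorem tendsto_mult_integral_companion_product:
  "(\<lambda>k. real k * (\<integral>x. (\<Prod>i<k. S x i / (S x i + lam)) \<partial>PiM {0..<k} (\<lambda>_. \<mu>))) \<longlonglongrightarrow> 0"
proof (rule LIMSEQ_imp_Suc)
  define E where "E k = (\<integral>x. (\<Prod>i<k. S x i / (S x i + lam)) \<partial>PiM {0..<k} (\<lambda>_. \<mu>))" for k
  define bound where "bound n = real (Suc n) * ((B + offset) * ln (B + offset))
      / ((offset + drift * n) * ln (offset + drift * n))" for n
  have E_nonneg: "0 \<le> E k" for k
    unfolding E_def using companion_ratio_bounds
    by (intro integral_nonneg_AE AE_I2 impI prod_nonneg) auto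
  have E_le: "real (Suc n) * E (Suc n) \<le> bound n" for n
  proof -
    have "(offset + drift * n) * ln (offset + drift * n) * E (Suc n) \<le> (B + offset) * ln (B + offset)"
      unfolding E_def by (rule integral_companion_product_le)
    then have "E (Suc n) \<le> (B + offset) * ln (B + offset) / ((offset + drift * n) * ln (offset + drift * n))"
      unfolding pos_le_divide_eq[OF mult_ln_offset_pos] mult.commute[of "E (Suc n)"] .
    from mult_left_mono[OF this of_nat_0_le_iff] show ?thesis
      unfolding bound_def by (simp only: times_divide_eq_right)
  qed
  have bound_tendsto: "bound \<longlonglongrightarrow> 0"
    unfolding bound_def using drift_pos offset_gt_1 by (rule tendsto_linear_over_mult_ln)
  show "(\<lambda>n. real (Suc n) * E (Suc n)) \<longlonglongrightarrow> 0"
  proof (rule tendsto_sandwich[OF _ _ tendsto_const bound_tendsto])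
    show "\<forall>\<^sub>F n in sequentially. 0 \<le> real (Suc n) * E (Suc n)"
      by (intro always_eventually allI mult_nonneg_nonneg E_nonneg) simp
    show "\<forall>\<^sub>F n in sequentially. real (Suc n) * E (Suc n) \<le> bound n"
      by (intro always_eventually allI E_le)
  qed
qed

end

theorem claim2p13p1:
  fixes wstar lam :: real
    and \<mu> :: "real measure"
    and h :: "real \<Rightarrow> real"
    and g :: "real \<Rightarrow> real \<Rightarrow> real"
  assumes wstar_pos: "wstar > 0"
    and mu_prob: "prob_space \<mu>"
    and mu_sets: "sets \<mu> = sets (restrict_space borel {0..wstar})"
    and h_meas: "h \<in> borel_measurable (restrict_space borel {0..wstar})"
    and h_nonneg: "\<forall>x\<in>{0..wstar}. h x \<ge> 0"
    and h_bdd: "\<exists>B. \<forall>x\<in>{0..wstar}. h x \<le> B"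
    and g_meas: "(\<lambda>(x, y). g x y) \<in> borel_measurable (restrict_space borel ({0..wstar} \<times> {0..wstar}))"
    and g_nonneg: "\<forall>x\<in>{0..wstar}. \<forall>y\<in>{0..wstar}. g x y \<ge> 0"
    and g_bdd: "\<exists>B. \<forall>x\<in>{0..wstar}. \<forall>y\<in>{0..wstar}. g x y \<le> B"
    and gsup_meas: "(\<lambda>w. SUP x\<in>{0..wstar}. g x w) \<in> borel_measurable \<mu>"
    and C1_gt: "lam > gtilde_star \<mu> g wstar"
    and C1_eq: "(\<integral>w. h w / (lam - gtilde \<mu> g w) \<partial>\<mu>) = 1"
  shows "(\<lambda>k. real k * (\<integral>W'. (\<Prod>i<k. companion h g (W' 0) W' i
                     / (companion h g (W' 0) W' i + lam)) \<partial>(PiM {0..<k} (\<lambda>_. \<mu>))))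
           \<longlonglongrightarrow> 0"
proof -
  have space_\<mu>: "space \<mu> = {0..wstar}"
    using sets_eq_imp_space_eq[OF mu_sets] by (simp add: space_restrict_space)
  obtain Bh where Bh: "\<forall>x\<in>{0..wstar}. h x \<le> Bh"
    using h_bdd ..
  obtain Bg where Bg: "\<forall>x\<in>{0..wstar}. \<forall>y\<in>{0..wstar}. g x y \<le> Bg"
    using g_bdd ..
  have g_pair: "(\<lambda>(x, y). g x y) \<in> borel_measurable (\<mu> \<Otimes>\<^sub>M \<mu>)"
    using mu_sets g_meas by (rule borel_measurable_pair_measure_restrict_space)
  have g_bounds: "0 \<le> g x y \<and> g x y \<le> max Bh Bg" if "x \<in> {0..wstar}" "y \<in> space \<mu>" for x y
    using g_nonneg Bg that unfolding space_\<mu> by (auto intro: max.coboundedI2)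
  interpret companion_setting \<mu> h g "max Bh Bg" "gtilde_star \<mu> g wstar" lam
  proof (rule companion_setting.intro)
    show "prob_space \<mu>"
      by (rule mu_prob)
    show "h \<in> borel_measurable \<mu>"
      using h_meas by (simp only: measurable_cong_sets[OF mu_sets refl])
    show "(\<lambda>(x, y). g x y) \<in> borel_measurable (\<mu> \<Otimes>\<^sub>M \<mu>)"
      by (rule g_pair)
    show "0 \<le> h x \<and> h x \<le> max Bh Bg" if "x \<in> space \<mu>" for x
      using h_nonneg Bh that unfolding space_\<mu> by (auto intro: max.coboundedI1)
    show "0 \<le> g x y \<and> g x y \<le> max Bh Bg" if "x \<in> space \<mu>" "y \<in> space \<mu>" for x y
      using g_bounds that unfolding space_\<mu> by blast
    show "gtilde \<mu> g x \<le> gtilde_star \<mu> g wstar" if "x \<in> space \<mu>" for x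
    proof (rule gtilde_le_gtilde_star[OF prob_space.finite_measure[OF mu_prob]])
      show "x \<in> {0..wstar}"
        using that unfolding space_\<mu> .
      show "g x \<in> borel_measurable \<mu>"
        using g_pair that by (rule measurable_pair_section)
    qed (use gsup_meas g_bounds in auto)
    show "gtilde_star \<mu> g wstar < lam"
      using C1_gt by simp
  qed
  show ?thesis
    by (rule tendsto_mult_integral_companion_product)
qed

end
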